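(* Let $3\leq m\leq n$, $\ell=m-1$, and $\mathfrak{B}=\mathbb{R}^{n\times n\times\ell}\setminus(\mathfrak{A}\cup\mathfrak{C})$. Then $\mathfrak{B}$ is contained in the boundary of $\mathfrak{C}$ (i.e. $\mathfrak{B}\subset\overline{\mathfrak{C}}$). In particular $\mathbb{R}^{n\times n\times\ell}$ is the disjoint union of $\mathfrak{A}$ and the Euclidean closure $\overline{\mathfrak{C}}$.
   Context: For $Y=(Y_1;\ldots;Y_\ell)\in\mathbb{R}^{n\times n\times\ell}$ and $\mathbf{a}=(a_1,\ldots,a_\ell,a_m)^\top\in\mathbb{R}^m$, $M(\mathbf{a},Y)=\sum_{k=1}^\ell a_kY_k-a_mE_n$. $\mathfrak{A}=\{Y\mid\det M(\mathbf{a},Y)>0\text{ for all }\mathbf{a}\neq\mathbf{0}\}$ and $\mathfrak{C}=\{Y\mid \det M(\mathbf{a},Y)<0\text{ for some }\mathbf{a}\in\mathbb{R}^m\}$; both are open. *)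

theory Defs
  imports "HOL-Analysis.Analysis"
begin

text \<open>A tensor Y in R^(n x n x l) is a family (Y_1,...,Y_l) of n x n real matrices,
  indexed by the finite type 'l (l = CARD('l)); n = CARD('n).
  A vector a = (a_1,...,a_l,a_m) in R^m (m = l+1) is represented as the pair (c, t)
  with c = (a_1,...,a_l) and t = a_m.\<close>

definition Mmat :: "real^'l \<Rightarrow> real \<Rightarrow> (real^'n^'n)^'l \<Rightarrow> real^'n^'n" where
  "Mmat c t Y = (\<Sum>k\<in>UNIV. c $ k *\<^sub>R Y $ k) - t *\<^sub>R mat 1"

definition setA :: "((real^'n^'n)^'l) set" where
  "setA = {Y. \<forall>c t. (c, t) \<noteq> (0, 0) \<longrightarrow> det (Mmat c t Y) > 0}"

definition setC :: "((real^'n^'n)^'l) set" where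
  "setC = {Y. \<exists>c t. det (Mmat c t Y) < 0}"

end

theory Submission
  imports Defs "HOL-Computational_Algebra.Polynomial"
begin

(* Disjointness: C lies in the closed set of all Y with det M(a,Y) \<le> 0 for some a on the
   unit sphere (a compact projection of a closed set), and that set misses A.

   Covering: if Y is outside A \<union> C then some nonzero (c,t) gives det M(c,t,Y) = 0, and
   c \<noteq> 0 because det(-t I) = (-t)^n.  A singular matrix S is a limit of matrices with
   negative determinant: S K = S for a matrix K with det K = -1, and for arbitrarily small
   \<epsilon> > 0 with det (S + \<epsilon> I) \<noteq> 0 one of S + \<epsilon> I, S + \<epsilon> K = (S + \<epsilon> I) K has negative
   determinant.  For c \<noteq> 0 the map Z \<mapsto> M(c,t,Z) has a continuous right inverse sending
   M(c,t,Y) back to Y, which carries this approximation over to Y \<in> closure C. *)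

lemma det_scaleR_real: "det (r *\<^sub>R (A::real^'n^'n)) = r ^ CARD('n) * det A"
proof -
  have "det (r *\<^sub>R A) = (\<Sum>p\<in>{p. p permutes (UNIV::'n set)}.
          r ^ CARD('n) * (of_int (sign p) * (\<Prod>i\<in>UNIV. A$i$p i)))"
    unfolding det_def by (intro sum.cong refl) (simp add: prod.distrib)
  also have "\<dots> = r ^ CARD('n) * det A" unfolding det_def by (simp add: sum_distrib_left)
  finally show ?thesis .
qed

lemma continuous_on_det [continuous_intros]:
  fixes f :: "'a::topological_space \<Rightarrow> real^'n^'n"
  assumes "continuous_on S f"
  shows "continuous_on S (\<lambda>x. det (f x))"
  unfolding det_def by (intro continuous_intros assms)

lemma matrix_add_rdistrib: "((A::real^'n^'m) + B) ** C = A ** C + B ** C"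
  by (vector matrix_matrix_mult_def sum.distrib[symmetric] field_simps)

text \<open>The function x \<mapsto> det (S + x I) is a polynomial, and it is not the zero polynomial:
  det (I + u S) \<rightarrow> 1 as u \<rightarrow> 0, and S + u\<inverse> I = u\<inverse> (I + u S).\<close>
lemma det_shift_polynomial:
  fixes S :: "real^'n^'n"
  obtains P where "P \<noteq> 0" and "\<And>x. poly P x = det (S + x *\<^sub>R mat 1)"
proof -
  define P where "P = (\<Sum>p\<in>{p. p permutes (UNIV::'n set)}. smult (of_int (sign p))
       (\<Prod>i\<in>UNIV. [:S$i$p i, if i = p i then 1 else 0:]))"
  have P: "poly P x = det (S + x *\<^sub>R mat 1)" for x
    unfolding P_def det_def poly_sum poly_prod
    by (intro sum.cong refl) (simp add: mat_def poly_prod)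
  have "continuous_on UNIV (\<lambda>u::real. det (mat 1 + u *\<^sub>R S))"
    by (intro continuous_intros)
  then have "isCont (\<lambda>u::real. det (mat 1 + u *\<^sub>R S)) 0"
    by (simp add: continuous_on_eq_continuous_at)
  then have "((\<lambda>u. det (mat 1 + u *\<^sub>R S)) \<longlongrightarrow> 1) (at_right 0)"
    by (simp add: isCont_def filterlim_at_split)
  then have "\<forall>\<^sub>F u in at_right (0::real). det (mat 1 + u *\<^sub>R S) > 0 \<and> u > 0"
    by (simp add: order_tendstoD eventually_at_right_less eventually_conj)
  then obtain u :: real where u: "u > 0" "det (mat 1 + u *\<^sub>R S) > 0"
    using eventually_happens' trivial_limit_at_right_real by blast
  have "S + (1/u) *\<^sub>R mat 1 = (1/u) *\<^sub>R (mat 1 + u *\<^sub>R S)"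
    using u by (simp add: algebra_simps)
  then have "poly P (1/u) \<noteq> 0"
    using u by (simp add: P det_scaleR_real)
  then have "P \<noteq> 0" by auto
  with P show thesis using that by blast
qed

lemma small_nonsingular_shift:
  fixes S :: "real^'n^'n"
  assumes "e > 0"
  obtains \<epsilon> where "0 < \<epsilon>" "\<epsilon> < e" "det (S + \<epsilon> *\<^sub>R mat 1) \<noteq> 0"
proof -
  obtain P where P: "P \<noteq> 0" "\<And>x. poly P x = det (S + x *\<^sub>R mat 1)"
    using det_shift_polynomial[of S] by blast
  have "finite {x. poly P x = 0}" using P(1) by (rule poly_roots_finite)
  moreover have "infinite {0<..<e}" using assms by (simp add: infinite_Ioo)
  ultimately obtain x where "x \<in> {0<..<e}" "x \<notin> {x. poly P x = 0}"
    by (metis infinite_super subsetI)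
  then show thesis using P(2) that by auto
qed

text \<open>A singular matrix S is fixed under right multiplication by an orientation-reversing
  matrix: conjugate the reflection in the k-th coordinate by a basis change whose k-th
  column is a kernel vector of S.\<close>
lemma singular_fixed_by_reflection:
  fixes S :: "real^'n^'n"
  assumes "det S = 0"
  obtains K where "det K = -1" "S ** K = S"
proof -
  obtain v where v: "v \<noteq> 0" "S *v v = 0"
    using assms det_eq_0_rank matrix_nonfull_linear_equations_eq by fastforce
  obtain k where k: "v $ k \<noteq> 0" using v(1) by (metis vec_eq_iff zero_index)
  define B :: "real^'n^'n" where "B = (\<chi> i j. if j = k then v$i else mat 1 $i$j)"
  have "det B = v $ k"
    using cramer_lemma[where A="mat 1 :: real^'n^'n" and k=k and x=v]
    unfolding B_def matrix_vector_mul_lid by simp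
  then obtain B' where B': "B ** B' = mat 1" "B' ** B = mat 1"
    using k invertible_det_nz[of B] unfolding invertible_def by auto
  define E :: "real^'n^'n" where "E = (\<chi> i j. if i = j then (if i = k then -1 else 1) else 0)"
  have det_E: "det E = -1"
  proof -
    have "det E = (\<Prod>i\<in>UNIV. E$i$i)" by (rule det_diagonal) (simp add: E_def)
    also have "\<dots> = (\<Prod>i\<in>UNIV. if i = k then -1 else 1)" by (simp add: E_def)
    also have "\<dots> = -1" by (simp add: prod.If_cases)
    finally show ?thesis .
  qed
  have column_k_zero: "(S ** B) $ i $ k = 0" for i
  proof -
    have "(S ** B) $ i $ k = (S *v v) $ i"
      by (simp add: matrix_matrix_mult_def matrix_vector_mult_def B_def)
    then show ?thesis using v by simp
  qed
  have "((S ** B) ** E) $ i $ j = (S ** B) $ i $ j" for i j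
  proof -
    have "((S ** B) ** E) $ i $ j = (\<Sum>l\<in>UNIV. (S ** B) $ i $ l * E $ l $ j)"
      by (simp add: matrix_matrix_mult_def)
    also have "\<dots> = (\<Sum>l\<in>UNIV. if l = j then (S ** B) $ i $ j * (if j = k then -1 else 1) else 0)"
      by (intro sum.cong refl) (auto simp: E_def)
    also have "\<dots> = (S ** B) $ i $ j * (if j = k then -1 else 1)"
      by (rule trans[OF sum.delta]) simp_all
    finally show ?thesis using column_k_zero by auto
  qed
  then have SBE: "(S ** B) ** E = S ** B" by (simp add: vec_eq_iff)
  define K where "K = B ** E ** B'"
  have "det B * det B' = 1" using B'(1) by (metis det_I det_mul)
  then have "det K = -1" unfolding K_def det_mul det_E by (simp add: algebra_simps)
  moreover have "S ** K = S"
    using SBE B'(1) unfolding K_def by (metis matrix_mul_assoc matrix_mul_rid)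
  ultimately show thesis by (rule that)
qed

lemma singular_in_closure_neg_det:
  fixes S :: "real^'n^'n"
  assumes "det S = 0"
  shows "S \<in> closure {N. det N < 0}"
  unfolding closure_approachable
proof (intro allI impI)
  fix e :: real assume e: "e > 0"
  obtain K where K: "det K = -1" "S ** K = S"
    using assms by (rule singular_fixed_by_reflection)
  have flip: "det (S + \<epsilon> *\<^sub>R K) = - det (S + \<epsilon> *\<^sub>R mat 1)" for \<epsilon>
  proof -
    have "(S + \<epsilon> *\<^sub>R mat 1) ** K = S + \<epsilon> *\<^sub>R K"
      by (simp add: matrix_add_rdistrib K(2) scalar_matrix_assoc[symmetric])
    then show ?thesis using K(1) by (metis det_mul mult_minus1_right)
  qed
  define C where "C = norm (mat 1 :: real^'n^'n) + norm K + 1"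
  have "C > 0" unfolding C_def by (smt (verit) norm_ge_zero)
  then have "e / C > 0" using e by simp
  then obtain \<epsilon> where \<epsilon>: "0 < \<epsilon>" "\<epsilon> < e / C" "det (S + \<epsilon> *\<^sub>R mat 1) \<noteq> 0"
    using small_nonsingular_shift[of "e / C" S] by blast
  have close: "dist (S + \<epsilon> *\<^sub>R M) S < e" if "norm M \<le> C" for M :: "real^'n^'n"
  proof -
    have "dist (S + \<epsilon> *\<^sub>R M) S = \<epsilon> * norm M" using \<epsilon>(1) by (simp add: dist_norm)
    also have "\<dots> \<le> \<epsilon> * C" using \<epsilon>(1) that by (simp add: mult_left_mono)
    also have "\<dots> < e" using \<epsilon>(2) \<open>C > 0\<close> by (simp add: pos_less_divide_eq)
    finally show ?thesis .
  qed
  have "det (S + \<epsilon> *\<^sub>R mat 1) < 0 \<or> det (S + \<epsilon> *\<^sub>R K) < 0"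
    using flip[of \<epsilon>] \<epsilon>(3) by linarith
  moreover have "norm (mat 1 :: real^'n^'n) \<le> C" "norm K \<le> C" unfolding C_def by auto
  ultimately show "\<exists>N\<in>{N. det N < 0}. dist N S < e" using close by blast
qed

lemma Mmat_scale: "Mmat (r *\<^sub>R c) (r * t) Y = r *\<^sub>R Mmat c t Y"
  unfolding Mmat_def by (simp add: scaleR_sum_right algebra_simps)

lemma det_Mmat_zero: "det (Mmat 0 0 (Y::(real^'n^'n)^'l)) = 0"
proof -
  have "Mmat 0 0 Y = (0::real^'n^'n)" unfolding Mmat_def by simp
  then show ?thesis by (metis det_0 mat_0)
qed

lemma continuous_on_Mmat [continuous_intros]:
  assumes "continuous_on S f" "continuous_on S g" "continuous_on S h"
  shows "continuous_on S (\<lambda>x. Mmat (f x) (g x) (h x))"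
  unfolding Mmat_def by (intro continuous_intros assms)

text \<open>For c \<noteq> 0 the map Y \<mapsto> M(c,t,Y) has a continuous (affine) right inverse taking
  the value Y at M(c,t,Y): move each Y_k in the direction c_k (N - M(c,t,Y)) / |c|^2.\<close>
lemma Mmat_continuous_section:
  fixes Y :: "(real^'n^'n)^'l"
  assumes "c \<noteq> 0"
  obtains \<phi> where "continuous_on UNIV \<phi>" "\<And>N. Mmat c t (\<phi> N) = N" "\<phi> (Mmat c t Y) = Y"
proof -
  define S where "S = Mmat c t Y"
  define \<phi> where "\<phi> = (\<lambda>N. (\<chi> k. Y$k + (c$k / (c \<bullet> c)) *\<^sub>R (N - S)) :: (real^'n^'n)^'l)"
  have cc: "c \<bullet> c \<noteq> 0" using assms by simp
  have "continuous_on UNIV \<phi>" unfolding \<phi>_def by (intro continuous_intros)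
  moreover have "Mmat c t (\<phi> N) = N" for N
  proof -
    have "(\<Sum>k\<in>UNIV. (c$k * c$k / (c \<bullet> c)) *\<^sub>R (N - S))
          = ((\<Sum>k\<in>UNIV. c$k * c$k) / (c \<bullet> c)) *\<^sub>R (N - S)"
      by (simp add: scaleR_sum_left sum_divide_distrib)
    also have "\<dots> = N - S" using cc by (simp add: inner_vec_def)
    finally show ?thesis
      unfolding Mmat_def \<phi>_def S_def by (simp add: scaleR_add_right sum.distrib)
  qed
  moreover have "\<phi> S = Y" unfolding \<phi>_def by (simp add: vec_eq_iff)
  ultimately show thesis unfolding S_def by (rule that)
qed

text \<open>No point of A is a limit of points of C: C is contained in the closed set of tensors
  whose pencil has a member of nonpositive determinant with coefficients on the unit
  sphere, and that set is disjoint from A.\<close>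
lemma setA_disjoint_closure_setC: "setA \<inter> closure (setC :: ((real^'n^'n)^'l) set) = {}"
proof -
  define T :: "(((real^'l) \<times> real) \<times> ((real^'n^'n)^'l)) set"
    where "T = {(a, Y). det (Mmat (fst a) (snd a) Y) \<le> 0}"
  define P where "P = {Y. \<exists>a. a \<in> sphere 0 1 \<and> (a, Y) \<in> T}"
  have "closed T" unfolding T_def case_prod_beta
    by (intro closed_Collect_le continuous_intros)
  then have "closed P" unfolding P_def
    by (intro closed_compact_projection) auto
  have "setC \<subseteq> P"
  proof
    fix Y :: "(real^'n^'n)^'l" assume "Y \<in> setC"
    then obtain c t where neg: "det (Mmat c t Y) < 0" unfolding setC_def by auto
    then have nz: "(c, t) \<noteq> 0" using det_Mmat_zero[of Y] by (auto simp: zero_prod_def)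
    define r where "r = 1 / norm (c, t)"
    have "r > 0" using nz by (simp add: r_def)
    have "norm (r *\<^sub>R (c, t)) = r * norm (c, t)"
      using \<open>r > 0\<close> by (simp only: norm_scaleR abs_of_pos)
    then have "r *\<^sub>R (c, t) \<in> sphere 0 1" using nz by (simp add: r_def)
    moreover have "det (Mmat (r *\<^sub>R c) (r * t) Y) = r ^ CARD('n) * det (Mmat c t Y)"
      by (simp add: Mmat_scale det_scaleR_real)
    then have "(r *\<^sub>R (c, t), Y) \<in> T"
      using \<open>r > 0\<close> neg unfolding T_def by (simp add: mult_pos_neg less_imp_le)
    ultimately show "Y \<in> P" unfolding P_def by blast
  qed
  have "Y \<notin> P" if "Y \<in> setA" for Y
  proof
    assume "Y \<in> P"
    then obtain a where a: "norm a = 1" "det (Mmat (fst a) (snd a) Y) \<le> 0"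
      unfolding P_def T_def by auto
    have "(fst a, snd a) \<noteq> (0, 0)" using a(1) by (auto simp: zero_prod_def)
    then have "det (Mmat (fst a) (snd a) Y) > 0" using \<open>Y \<in> setA\<close> unfolding setA_def by blast
    then show False using a(2) by simp
  qed
  then have "setA \<inter> P = {}" by blast
  then show ?thesis using closure_minimal[OF \<open>setC \<subseteq> P\<close> \<open>closed P\<close>] by blast
qed

lemma outside_A_C_in_closure_setC:
  assumes "Y \<notin> setA" "Y \<notin> setC"
  shows "Y \<in> closure (setC :: ((real^'n^'n)^'l) set)"
proof -
  from assms(1) obtain c t where ct: "(c, t) \<noteq> (0, 0)" "det (Mmat c t Y) \<le> 0"
    unfolding setA_def by (auto simp: not_less)
  moreover have "det (Mmat c t Y) \<ge> 0" using assms(2) unfolding setC_def by (auto simp: not_less)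
  ultimately have "det (Mmat c t Y) = 0" by simp
  have "c \<noteq> 0"
  proof
    assume "c = 0"
    then have "det (Mmat c t Y) = (-t) ^ CARD('n)"
      using det_scaleR_real[of "-t" "mat 1 :: real^'n^'n"] by (simp add: Mmat_def)
    then show False using ct \<open>det (Mmat c t Y) = 0\<close> \<open>c = 0\<close> by simp
  qed
  then obtain \<phi> where \<phi>: "continuous_on UNIV \<phi>" "\<And>N. Mmat c t (\<phi> N) = N"
      "\<phi> (Mmat c t Y) = Y"
    using Mmat_continuous_section[where t = t and Y = Y] by blast
  have "\<phi> ` {N. det N < 0} \<subseteq> setC" unfolding setC_def
    using \<phi>(2) by (auto intro!: exI[where x = c] exI[where x = t])
  then have "\<phi> ` closure {N. det N < 0} \<subseteq> closure setC"
    using continuous_image_closure_subset[OF \<phi>(1)] closure_mono by blast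
  moreover have "Mmat c t Y \<in> closure {N. det N < 0}"
    using \<open>det (Mmat c t Y) = 0\<close> by (rule singular_in_closure_neg_det)
  ultimately show ?thesis using \<phi>(3) by (metis image_eqI subsetD)
qed

theorem mainTheorem10:
  assumes "3 \<le> CARD('l) + 1" and "CARD('l) + 1 \<le> CARD('n)"
  shows "UNIV - (setA \<union> setC) \<subseteq> frontier (setC :: ((real^'n^'n)^'l) set)
    \<and> setA \<inter> closure (setC :: ((real^'n^'n)^'l) set) = {}
    \<and> setA \<union> closure (setC :: ((real^'n^'n)^'l) set) = UNIV"
proof (intro conjI)
  show "UNIV - (setA \<union> setC) \<subseteq> frontier (setC :: ((real^'n^'n)^'l) set)"
    unfolding frontier_def using outside_A_C_in_closure_setC interior_subset by blast
  show "setA \<inter> closure (setC :: ((real^'n^'n)^'l) set) = {}"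
    by (rule setA_disjoint_closure_setC)
  show "setA \<union> closure (setC :: ((real^'n^'n)^'l) set) = UNIV"
    using outside_A_C_in_closure_setC closure_subset by blast
qed

end
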